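(* Let $(\Gamma,\psi)$ be an $H$-asymptotic couple with asymptotic integration. Suppose $\alpha\in(\Gamma^{<})'$ and $n\ge1$. Then $\alpha+(n+1)(s(\alpha)-\alpha)\in(\Gamma^{>})'$.
   Context: An asymptotic couple is a pair $(\Gamma,\psi)$ with $\Gamma$ an ordered abelian group and $\psi:\Gamma\setminus\{0\}\to\Gamma$ such that for all nonzero $\alpha,\beta$: $\alpha+\beta\ne0\Rightarrow\psi(\alpha+\beta)\ge\min(\psi(\alpha),\psi(\beta))$; $\psi(k\alpha)=\psi(\alpha)$ for $k\in\mathbb{Z}\setminus\{0\}$; $\alpha>0\Rightarrow\alpha+\psi(\alpha)>\psi(\beta)$. $H$-asymptotic: $0<\alpha\le\beta\Rightarrow\psi(\alpha)\ge\psi(\beta)$. Write $\gamma'=\gamma+\psi(\gamma)$ for $\gamma\ne0$, $(\Gamma^{>})'=\{\gamma':\gamma>0\}$, $(\Gamma^{<})'=\{\gamma':\gamma<0\}$. Asymptotic integration: every $\alpha\in\Gamma$ equals $\gamma'$ for a (necessarily unique) $\gamma\ne0$, denoted $\int\alpha$. The successor function is $s(\alpha)=\psi(\int\alpha)$. *)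

theory Defs
  imports Main
begin

text \<open>An asymptotic couple on an ordered abelian group 'a: the map psi is only
 meaningful on nonzero elements; its value at 0 is irrelevant.\<close>

definition nat_mult :: "nat \<Rightarrow> 'a::ab_group_add \<Rightarrow> 'a" where
  "nat_mult n a = (((+) a) ^^ n) 0"

definition int_mult :: "int \<Rightarrow> 'a::ab_group_add \<Rightarrow> 'a" where
  "int_mult k a = (if k \<ge> 0 then nat_mult (nat k) a else - nat_mult (nat (- k)) a)"

definition asymptotic_couple :: "('a::linordered_ab_group_add \<Rightarrow> 'a) \<Rightarrow> bool" where
  "asymptotic_couple psi \<longleftrightarrow>
     (\<forall>a b. a \<noteq> 0 \<and> b \<noteq> 0 \<and> a + b \<noteq> 0 \<longrightarrow> psi (a + b) \<ge> min (psi a) (psi b)) \<and>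
     (\<forall>a (k::int). a \<noteq> 0 \<and> k \<noteq> 0 \<longrightarrow> psi (int_mult k a) = psi a) \<and>
     (\<forall>a b. a > 0 \<and> b \<noteq> 0 \<longrightarrow> a + psi a > psi b)"

definition H_asymptotic :: "('a::linordered_ab_group_add \<Rightarrow> 'a) \<Rightarrow> bool" where
  "H_asymptotic psi \<longleftrightarrow> (\<forall>a b. 0 < a \<and> a \<le> b \<longrightarrow> psi a \<ge> psi b)"

definition deriv_ac :: "('a::linordered_ab_group_add \<Rightarrow> 'a) \<Rightarrow> 'a \<Rightarrow> 'a" where
  "deriv_ac psi g = g + psi g"

definition pos_deriv_set :: "('a::linordered_ab_group_add \<Rightarrow> 'a) \<Rightarrow> 'a set" where
  "pos_deriv_set psi = {deriv_ac psi g | g. g > 0}"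

definition neg_deriv_set :: "('a::linordered_ab_group_add \<Rightarrow> 'a) \<Rightarrow> 'a set" where
  "neg_deriv_set psi = {deriv_ac psi g | g. g < 0}"

definition has_asymptotic_integration :: "('a::linordered_ab_group_add \<Rightarrow> 'a) \<Rightarrow> bool" where
  "has_asymptotic_integration psi \<longleftrightarrow> (\<forall>a. \<exists>g. g \<noteq> 0 \<and> deriv_ac psi g = a)"

definition integral_ac :: "('a::linordered_ab_group_add \<Rightarrow> 'a) \<Rightarrow> 'a \<Rightarrow> 'a" where
  "integral_ac psi a = (THE g. g \<noteq> 0 \<and> deriv_ac psi g = a)"

definition successor_ac :: "('a::linordered_ab_group_add \<Rightarrow> 'a) \<Rightarrow> 'a \<Rightarrow> 'a" where
  "successor_ac psi a = psi (integral_ac psi a)"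

end

theory Submission
  imports Defs
begin

text \<open>Writing \<open>\<alpha> = g'\<close> with \<open>g < 0\<close>, injectivity of \<open>\<gamma> \<mapsto> \<gamma>'\<close> gives \<open>\<integral>\<alpha> = g\<close>, so
  \<open>s(\<alpha>) - \<alpha> = \<psi>(g) - \<alpha> = -g\<close>. Hence \<open>\<alpha> + (n+1)(s(\<alpha>) - \<alpha>) = n|g| + \<psi>(g) = (n|g|)'\<close>,
  because \<open>\<psi>\<close> is invariant under nonzero integer multiples and \<open>n|g| > 0\<close>.\<close>

lemma nat_mult_0 [simp]: "nat_mult 0 a = 0"
  by (simp add: nat_mult_def)

lemma nat_mult_Suc: "nat_mult (Suc n) a = a + nat_mult n a"
  by (simp add: nat_mult_def)

lemma nat_mult_uminus: "nat_mult n (- a) = - nat_mult n (a::'a::ab_group_add)"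
  by (induction n) (simp_all add: nat_mult_Suc)

lemma nat_mult_pos:
  fixes a :: "'a::linordered_ab_group_add"
  assumes "a > 0" and "n \<ge> 1"
  shows "nat_mult n a > 0"
  using assms(2)
proof (induction n rule: dec_induct)
  case base
  then show ?case using assms(1) by (simp add: nat_mult_Suc)
next
  case (step n)
  then show ?case using assms(1) by (simp add: nat_mult_Suc add_pos_pos)
qed

lemma int_mult_uminus_of_nat: "int_mult (- int n) a = - nat_mult n a"
  by (cases n) (simp_all add: int_mult_def nat_add_distrib)

lemma psi_int_mult:
  assumes "asymptotic_couple psi" and "a \<noteq> 0" and "k \<noteq> 0"
  shows "psi (int_mult k a) = psi a"
  using assms unfolding asymptotic_couple_def by blast

lemma deriv_ac_neq_of_psi_less:
  fixes psi :: "'a::linordered_ab_group_add \<Rightarrow> 'a"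
  assumes ac: "asymptotic_couple psi" and "a \<noteq> 0" and "b \<noteq> 0" and less: "psi a < psi b"
  shows "deriv_ac psi a \<noteq> deriv_ac psi b"
proof
  assume "deriv_ac psi a = deriv_ac psi b"
  define d where "d = a - b"
  have d_eq: "d = psi b - psi a" and "b + d = a"
    using \<open>deriv_ac psi a = deriv_ac psi b\<close> by (simp_all add: d_def deriv_ac_def algebra_simps)
  have "d > 0" using d_eq less by simp
  then have "d + psi d > psi b"
    using ac \<open>b \<noteq> 0\<close> unfolding asymptotic_couple_def by blast
  have "psi a = psi b - d" using d_eq by simp
  also have "\<dots> < psi d" using \<open>d + psi d > psi b\<close> by (simp add: algebra_simps)
  finally have "psi a < psi d" .
  \<comment> \<open>so the ultrametric inequality at \<open>a = b + d\<close> would force \<open>psi a > psi a\<close>\<close>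
  moreover have "psi (b + d) \<ge> min (psi b) (psi d)"
    using ac \<open>b \<noteq> 0\<close> \<open>d > 0\<close> \<open>a \<noteq> 0\<close> \<open>b + d = a\<close>
    unfolding asymptotic_couple_def by (metis less_irrefl)
  ultimately show False using less \<open>b + d = a\<close> by (auto simp: min_le_iff_disj)
qed

lemma deriv_ac_inj:
  fixes psi :: "'a::linordered_ab_group_add \<Rightarrow> 'a"
  assumes ac: "asymptotic_couple psi" and "a \<noteq> 0" and "b \<noteq> 0"
    and eq: "deriv_ac psi a = deriv_ac psi b"
  shows "a = b"
proof (cases "psi a" "psi b" rule: linorder_cases)
  case equal
  then show ?thesis using eq by (simp add: deriv_ac_def)
qed (use deriv_ac_neq_of_psi_less[OF ac] assms in metis)+

lemma integral_ac_deriv_ac: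
  assumes "asymptotic_couple psi" and "g \<noteq> 0"
  shows "integral_ac psi (deriv_ac psi g) = g"
  unfolding integral_ac_def
  using assms deriv_ac_inj by (blast intro: the_equality)

lemma successor_ac_deriv_ac:
  assumes "asymptotic_couple psi" and "g \<noteq> 0"
  shows "successor_ac psi (deriv_ac psi g) = psi g"
  using integral_ac_deriv_ac[OF assms] by (simp add: successor_ac_def)

theorem lemma3p10:
  fixes psi :: "'a::linordered_ab_group_add \<Rightarrow> 'a" and \<alpha> :: 'a and n :: nat
  assumes "asymptotic_couple psi"
    and "H_asymptotic psi"
    and "has_asymptotic_integration psi"
    and "\<alpha> \<in> neg_deriv_set psi"
    and "n \<ge> 1"
  shows "\<alpha> + nat_mult (n + 1) (successor_ac psi \<alpha> - \<alpha>) \<in> pos_deriv_set psi"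
proof -
  obtain g where "g < 0" and \<alpha>: "\<alpha> = deriv_ac psi g"
    using assms(4) unfolding neg_deriv_set_def by blast
  then have step: "successor_ac psi \<alpha> - \<alpha> = - g"
    using successor_ac_deriv_ac[OF assms(1)] by (simp add: deriv_ac_def)
  define \<delta> where "\<delta> = nat_mult n (- g)"
  have "\<delta> > 0"
    using nat_mult_pos[of "- g" n] \<open>g < 0\<close> assms(5) by (simp add: \<delta>_def)
  have "\<delta> = int_mult (- int n) g"
    by (simp add: \<delta>_def nat_mult_uminus int_mult_uminus_of_nat)
  then have "psi \<delta> = psi g"
    using psi_int_mult[OF assms(1)] \<open>g < 0\<close> assms(5) by simp
  then have "\<alpha> + nat_mult (n + 1) (successor_ac psi \<alpha> - \<alpha>) = deriv_ac psi \<delta>"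
    using step \<alpha> by (simp add: nat_mult_Suc \<delta>_def deriv_ac_def algebra_simps)
  then show ?thesis
    using \<open>\<delta> > 0\<close> unfolding pos_deriv_set_def by blast
qed

end
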